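(* Let $\mathbb{F}\in\{\mathbb{R},\mathbb{C}\}$. If $S\in\mathsf{GL}_m(\mathbb{F})$ and $T\in\mathsf{GL}_n(\mathbb{F})$ are ideal, then $S\otimes T$ is ideal.
   Context: For $x\in\mathbb{F}^n$, $D_x$ is the diagonal matrix with $(i,i)$-entry $x_i$; $M\ge0$ means every entry of $M$ is a nonnegative real number. For $S\in\mathsf{GL}_n(\mathbb{F})$, $\mathcal{C}(S)=\{x\in\mathbb{F}^n\mid SD_xS^{-1}\ge 0\}$, and $\mathcal{C}_r(S)$ denotes the conical hull (set of nonnegative real linear combinations) of the rows of $S$, viewed as vectors in $\mathbb{F}^n$. An invertible $S$ is a Perron similarity if for some $i$ the column $Se_i$ and the row $e_i^\top S^{-1}$ are both entrywise nonnegative or both entrywise nonpositive (real). A Perron similarity $S$ is called ideal if $\mathcal{C}(S)=\mathcal{C}_r(S)$. $\otimes$ is the Kronecker product. *)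

theory Defs
  imports "HOL-Analysis.Analysis"
begin

text \<open>Matrices over F are square matrices 'a^'n^'n indexed by a finite type 'n;
  F is real or complex (we work over any real algebra, using of_real to
  identify the nonnegative reals inside F).\<close>

definition nonneg_entry :: "'a::real_algebra_1 \<Rightarrow> bool" where
  "nonneg_entry z \<longleftrightarrow> (\<exists>r::real. r \<ge> 0 \<and> z = of_real r)"

definition nonpos_entry :: "'a::real_algebra_1 \<Rightarrow> bool" where
  "nonpos_entry z \<longleftrightarrow> (\<exists>r::real. r \<le> 0 \<and> z = of_real r)"

definition mat_nonneg :: "'a::real_algebra_1^'n^'m \<Rightarrow> bool" where
  "mat_nonneg M \<longleftrightarrow> (\<forall>i j. nonneg_entry (M $ i $ j))"

definition diag_vec :: "'a::zero^'n \<Rightarrow> 'a^'n^'n" where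
  "diag_vec x = (\<chi> i j. if i = j then x $ i else 0)"

definition spec_cone :: "'a::{real_algebra_1,comm_ring_1}^'n^'n \<Rightarrow> ('a^'n) set" where
  "spec_cone S = {x. mat_nonneg (S ** diag_vec x ** matrix_inv S)}"

definition row_cone :: "'a::real_algebra_1^'n^'n \<Rightarrow> ('a^'n) set" where
  "row_cone S = {x. \<exists>c::'n \<Rightarrow> real. (\<forall>i. c i \<ge> 0) \<and> x = (\<Sum>i\<in>UNIV. c i *\<^sub>R row i S)}"

definition perron_similarity :: "'a::{real_algebra_1,comm_ring_1}^'n^'n \<Rightarrow> bool" where
  "perron_similarity S \<longleftrightarrow> invertible S \<and>
     (\<exists>i. ((\<forall>j. nonneg_entry (S $ j $ i)) \<and> (\<forall>j. nonneg_entry (matrix_inv S $ i $ j)))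
        \<or> ((\<forall>j. nonpos_entry (S $ j $ i)) \<and> (\<forall>j. nonpos_entry (matrix_inv S $ i $ j))))"

definition ideal_ps :: "'a::{real_algebra_1,comm_ring_1}^'n^'n \<Rightarrow> bool" where
  "ideal_ps S \<longleftrightarrow> perron_similarity S \<and> spec_cone S = row_cone S"

text \<open>Kronecker product; index (i,k) of the product type corresponds to the
  usual lexicographic row index of S \<otimes> T.\<close>
definition kron :: "'a::times^'m^'m \<Rightarrow> 'a^'n^'n \<Rightarrow> 'a^('m \<times> 'n)^('m \<times> 'n)" where
  "kron S T = (\<chi> p q. S $ fst p $ fst q * T $ snd p $ snd q)"

end

theory Submission
  imports Defs
begin

text \<open>Read z, indexed by pairs, as the m \<times> n matrix Z with rows Z_j.  Entrywise,
  (S \<otimes> T) D_z (S \<otimes> T)^-1 = S D_w S^-1, where w_j is the (k, k') entry of T D_(Z_j) T^-1;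
  so z \<in> C(S \<otimes> T) iff each such w lies in C(S).  Dually, as x \<in> C_r(S) iff x S^-1 \<ge> 0,
  z \<in> C_r(S \<otimes> T) iff every row of (S^-1)^T Z lies in C_r(T).  If C(S) = C_r(S), the condition
  w S^-1 \<ge> 0 reads: every row of (S^-1)^T Z lies in C(T), and C(T) = C_r(T) closes the circle.
  The Perron property passes to S \<otimes> T through the pair of Perron indices.\<close>

lemma matrix_mul_matrix_inv:
  fixes S :: "'a::semiring_1^'n^'m"
  assumes "invertible S"
  shows "S ** matrix_inv S = mat 1" "matrix_inv S ** S = mat 1"
  using someI_ex[OF assms[unfolded invertible_def]] unfolding matrix_inv_def by auto

lemma matrix_inv_unique:
  fixes S :: "'a::semiring_1^'n^'n"
  assumes "S ** B = mat 1" "B ** S = mat 1"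
  shows "invertible S" "matrix_inv S = B"
proof -
  show "invertible S" using assms invertible_def by blast
  then have "matrix_inv S ** S = mat 1" by (rule matrix_mul_matrix_inv)
  then show "matrix_inv S = B"
    by (metis assms(1) matrix_mul_assoc matrix_mul_lid matrix_mul_rid)
qed

lemma sum_UNIV_prod:
  fixes f :: "'m::finite \<times> 'n::finite \<Rightarrow> 'a::comm_monoid_add"
  shows "(\<Sum>r\<in>UNIV. f r) = (\<Sum>j\<in>UNIV. \<Sum>l\<in>UNIV. f (j, l))"
  by (simp add: sum.cartesian_product UNIV_Times_UNIV[symmetric] del: UNIV_Times_UNIV)

lemma diag_vec_conj_nth:
  fixes A :: "'a::comm_semiring_1^'n^'m" and C :: "'a^'p^'n"
  shows "(A ** diag_vec x ** C) $ i $ k = (\<Sum>j\<in>UNIV. A $ i $ j * x $ j * C $ j $ k)"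
  by (simp add: matrix_matrix_mult_def diag_vec_def if_distrib cong: if_cong)

lemma sum_scaleR_row:
  fixes S :: "'a::real_algebra_1^'n^'m"
  shows "(\<Sum>i\<in>UNIV. c i *\<^sub>R row i S) = (\<chi> i. of_real (c i)) v* S"
  by (simp add: vec_eq_iff row_def vector_matrix_mult_def sum_component)
     (simp add: scaleR_conv_of_real)

lemma row_cone_iff:
  fixes S :: "'a::{real_algebra_1,comm_ring_1}^'n^'n"
  assumes "invertible S"
  shows "x \<in> row_cone S \<longleftrightarrow> (\<forall>i. nonneg_entry ((x v* matrix_inv S) $ i))"
proof
  assume "x \<in> row_cone S"
  then obtain c where c: "\<forall>i. c i \<ge> 0" "x = (\<chi> i. of_real (c i)) v* S"
    by (auto simp: row_cone_def sum_scaleR_row)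
  then have "x v* matrix_inv S = (\<chi> i. of_real (c i))"
    by (simp add: vector_matrix_mul_assoc matrix_mul_matrix_inv assms)
  then show "\<forall>i. nonneg_entry ((x v* matrix_inv S) $ i)"
    using c(1) by (auto simp: nonneg_entry_def)
next
  assume "\<forall>i. nonneg_entry ((x v* matrix_inv S) $ i)"
  then obtain c where c: "\<And>i. c i \<ge> 0" "\<And>i. (x v* matrix_inv S) $ i = of_real (c i)"
    unfolding nonneg_entry_def by metis
  then have "(\<chi> i. of_real (c i)) = x v* matrix_inv S"
    by (simp add: vec_eq_iff)
  then have "(\<chi> i. of_real (c i)) v* S = x"
    by (simp add: vector_matrix_mul_assoc matrix_mul_matrix_inv assms)
  then show "x \<in> row_cone S"
    unfolding row_cone_def sum_scaleR_row using c(1) by blast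
qed

lemma kron_mult:
  fixes A C :: "'a::comm_semiring_1^'m^'m" and B D :: "'a^'n^'n"
  shows "kron A B ** kron C D = kron (A ** C) (B ** D)"
  by (simp add: kron_def matrix_matrix_mult_def vec_eq_iff sum_UNIV_prod sum_product ac_simps)

lemma kron_mat_1: "kron (mat 1 :: 'a::semiring_1^'m^'m) (mat 1 :: 'a^'n^'n) = mat 1"
  by (auto simp: kron_def mat_def vec_eq_iff)

lemma
  fixes S :: "'a::comm_semiring_1^'m^'m" and T :: "'a^'n^'n"
  assumes "invertible S" "invertible T"
  shows invertible_kron: "invertible (kron S T)"
    and matrix_inv_kron: "matrix_inv (kron S T) = kron (matrix_inv S) (matrix_inv T)"
  using matrix_inv_unique[of "kron S T" "kron (matrix_inv S) (matrix_inv T)"]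
  by (simp_all add: kron_mult matrix_mul_matrix_inv assms kron_mat_1)

definition reshape :: "'a^('m \<times> 'n) \<Rightarrow> 'a^'n^'m" where
  "reshape z = (\<chi> j l. z $ (j, l))"

lemma vector_matrix_mult_kron_nth:
  fixes C :: "'a::comm_semiring_1^'m^'m" and D :: "'a^'n^'n"
  shows "(z v* kron C D) $ (i, k) = ((transpose C ** reshape z) $ i v* D) $ k"
  by (simp add: vector_matrix_mult_def matrix_matrix_mult_def transpose_def reshape_def kron_def
      sum_UNIV_prod sum_distrib_left sum_distrib_right ac_simps)
     (rule sum.swap)

lemma kron_diag_vec_conj_nth:
  fixes A C :: "'a::comm_semiring_1^'m^'m" and B D :: "'a^'n^'n"
  shows "(kron A B ** diag_vec z ** kron C D) $ (a, k) $ (a', k') =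
    (A ** diag_vec (\<chi> j. (B ** diag_vec (reshape z $ j) ** D) $ k $ k') ** C) $ a $ a'"
  by (simp add: diag_vec_conj_nth kron_def reshape_def sum_UNIV_prod sum_distrib_left
      sum_distrib_right ac_simps)

lemma vector_matrix_mult_diag_vec_conj_nth:
  fixes B D :: "'a::comm_semiring_1^'n^'n" and C :: "'a^'m^'m" and Z :: "'a^'n^'m"
  shows "((\<chi> j. (B ** diag_vec (Z $ j) ** D) $ k $ k') v* C) $ i =
    (B ** diag_vec ((transpose C ** Z) $ i) ** D) $ k $ k'"
  unfolding diag_vec_conj_nth
  by (simp add: vector_matrix_mult_def matrix_matrix_mult_def transpose_def
      sum_distrib_left sum_distrib_right ac_simps)
     (rule sum.swap)

lemma spec_cone_kron_iff:
  fixes S :: "'a::{real_algebra_1,comm_ring_1}^'m^'m" and T :: "'a^'n^'n"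
  assumes "invertible S" "invertible T"
  shows "z \<in> spec_cone (kron S T) \<longleftrightarrow>
    (\<forall>k k'. (\<chi> j. (T ** diag_vec (reshape z $ j) ** matrix_inv T) $ k $ k') \<in> spec_cone S)"
  by (auto simp: spec_cone_def mat_nonneg_def matrix_inv_kron assms kron_diag_vec_conj_nth)

lemma row_cone_kron_iff:
  fixes S :: "'a::{real_algebra_1,comm_ring_1}^'m^'m" and T :: "'a^'n^'n"
  assumes "invertible S" "invertible T"
  shows "z \<in> row_cone (kron S T) \<longleftrightarrow>
    (\<forall>i. (transpose (matrix_inv S) ** reshape z) $ i \<in> row_cone T)"
  by (simp add: row_cone_iff invertible_kron matrix_inv_kron assms vector_matrix_mult_kron_nth)

lemma spec_cone_kron_eq_row_cone:
  fixes S :: "'a::{real_algebra_1,comm_ring_1}^'m^'m" and T :: "'a^'n^'n"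
  assumes "invertible S" "spec_cone S = row_cone S"
    and "invertible T" "spec_cone T = row_cone T"
  shows "spec_cone (kron S T) = row_cone (kron S T)"
proof (rule set_eqI)
  fix z
  have "z \<in> spec_cone (kron S T) \<longleftrightarrow>
      (\<forall>k k'. (\<chi> j. (T ** diag_vec (reshape z $ j) ** matrix_inv T) $ k $ k') \<in> row_cone S)"
    using spec_cone_kron_iff assms by metis
  also have "\<dots> \<longleftrightarrow> (\<forall>i. (transpose (matrix_inv S) ** reshape z) $ i \<in> spec_cone T)"
    by (auto simp: row_cone_iff assms(1) spec_cone_def mat_nonneg_def
        vector_matrix_mult_diag_vec_conj_nth)
  also have "\<dots> \<longleftrightarrow> z \<in> row_cone (kron S T)"
    using row_cone_kron_iff assms by metis
  finally show "z \<in> spec_cone (kron S T) \<longleftrightarrow> z \<in> row_cone (kron S T)" .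
qed

lemma nonneg_entry_mult_nonneg_nonneg:
  "nonneg_entry (a::'a::real_algebra_1) \<Longrightarrow> nonneg_entry b \<Longrightarrow> nonneg_entry (a * b)"
  unfolding nonneg_entry_def by (metis mult_nonneg_nonneg of_real_mult)

lemma nonneg_entry_mult_nonpos_nonpos:
  "nonpos_entry (a::'a::real_algebra_1) \<Longrightarrow> nonpos_entry b \<Longrightarrow> nonneg_entry (a * b)"
  unfolding nonneg_entry_def nonpos_entry_def by (metis mult_nonpos_nonpos of_real_mult)

lemma nonpos_entry_mult_nonneg_nonpos:
  "nonneg_entry (a::'a::real_algebra_1) \<Longrightarrow> nonpos_entry b \<Longrightarrow> nonpos_entry (a * b)"
  unfolding nonneg_entry_def nonpos_entry_def by (metis mult_nonneg_nonpos of_real_mult)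

lemma nonpos_entry_mult_nonpos_nonneg:
  "nonpos_entry (a::'a::real_algebra_1) \<Longrightarrow> nonneg_entry b \<Longrightarrow> nonpos_entry (a * b)"
  unfolding nonneg_entry_def nonpos_entry_def by (metis mult_nonpos_nonneg of_real_mult)

lemma perron_similarity_kron:
  fixes S :: "'a::{real_algebra_1,comm_ring_1}^'m^'m" and T :: "'a^'n^'n"
  assumes "perron_similarity S" "perron_similarity T"
  shows "perron_similarity (kron S T)"
proof -
  have inv: "invertible S" "invertible T"
    using assms by (auto simp: perron_similarity_def)
  obtain i where
    "(\<forall>j. nonneg_entry (S $ j $ i)) \<and> (\<forall>j. nonneg_entry (matrix_inv S $ i $ j)) \<or>
     (\<forall>j. nonpos_entry (S $ j $ i)) \<and> (\<forall>j. nonpos_entry (matrix_inv S $ i $ j))"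
    using assms(1) by (auto simp: perron_similarity_def)
  moreover obtain k where
    "(\<forall>l. nonneg_entry (T $ l $ k)) \<and> (\<forall>l. nonneg_entry (matrix_inv T $ k $ l)) \<or>
     (\<forall>l. nonpos_entry (T $ l $ k)) \<and> (\<forall>l. nonpos_entry (matrix_inv T $ k $ l))"
    using assms(2) by (auto simp: perron_similarity_def)
  ultimately have
    "(\<forall>p. nonneg_entry (kron S T $ p $ (i, k))) \<and>
       (\<forall>p. nonneg_entry (matrix_inv (kron S T) $ (i, k) $ p)) \<or>
     (\<forall>p. nonpos_entry (kron S T $ p $ (i, k))) \<and>
       (\<forall>p. nonpos_entry (matrix_inv (kron S T) $ (i, k) $ p))"
    unfolding matrix_inv_kron[OF inv]
    by (auto simp: kron_def
        intro: nonneg_entry_mult_nonneg_nonneg nonneg_entry_mult_nonpos_nonpos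
          nonpos_entry_mult_nonneg_nonpos nonpos_entry_mult_nonpos_nonneg)
  then show ?thesis
    unfolding perron_similarity_def using invertible_kron[OF inv] by blast
qed

lemma ideal_ps_kron:
  fixes S :: "'a::{real_algebra_1,comm_ring_1}^'m^'m" and T :: "'a^'n^'n"
  assumes "ideal_ps S" "ideal_ps T"
  shows "ideal_ps (kron S T)"
proof -
  have "invertible S" "invertible T"
    using assms by (auto simp: ideal_ps_def perron_similarity_def)
  then show ?thesis
    using assms unfolding ideal_ps_def
    by (simp add: perron_similarity_kron spec_cone_kron_eq_row_cone)
qed

theorem theorem5p1:
  shows "(\<forall>(S::real^'m^'m) (T::real^'n^'n). ideal_ps S \<and> ideal_ps T \<longrightarrow> ideal_ps (kron S T))
       \<and> (\<forall>(S::complex^'m^'m) (T::complex^'n^'n). ideal_ps S \<and> ideal_ps T \<longrightarrow> ideal_ps (kron S T))"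
  by (simp add: ideal_ps_kron)

end
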